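(* Let $X$ be a set and let $\mathcal F:X^4\to\mathbb R$ satisfy, for all $x_1,x_2,x_3,x_4,w\in X$: $$\mathcal F(x_1,x_2,x_3,x_4)+\mathcal F(x_2,x_3,x_1,x_4)+\mathcal F(x_3,x_1,x_2,x_4)=0,$$ $$\mathcal F(x_2,x_1,x_3,x_4)=\mathcal F(x_1,x_2,x_4,x_3)=-\mathcal F(x_1,x_2,x_3,x_4),$$ $$\mathcal F(x_1,x_2,x_3,x_4)=\mathcal F(x_1,w,x_3,x_4)+\mathcal F(w,x_2,x_3,x_4).$$ Then there exists a function $g:X^2\to\mathbb R$ such that for all $x_1,x_2,x_3,x_4\in X$ $$\mathcal F(x_1,x_2,x_3,x_4)=g(x_1,x_3)-g(x_1,x_4)-g(x_2,x_3)+g(x_2,x_4).$$ Moreover, for any fixed $a,b\in X$ there is exactly one such $g$ satisfying the normalization $g(a,w)=g(w,b)=0$ for all $w\in X$ (namely $g(u,v)=\mathcal F(u,a,v,b)$). *)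

theory Defs
  imports Complex_Main
begin

end

theory Submission
  imports Defs
begin

text \<open>
  The cyclic identity together with the two antisymmetries yields the pair symmetry
  F(p,q,r,s) = F(r,s,p,q), so the additivity in the first pair of slots transfers to the
  second pair. Splitting both pairs through fixed base points a and b expresses F as a
  double difference of g(u,v) = F(u,a,v,b); conversely the normalization of any such g
  makes it recoverable as F(u,a,v,b).
\<close>

locale curvature_like =
  fixes F :: "'a \<Rightarrow> 'a \<Rightarrow> 'a \<Rightarrow> 'a \<Rightarrow> real"
  assumes cyclic: "F x1 x2 x3 x4 + F x2 x3 x1 x4 + F x3 x1 x2 x4 = 0"
    and antisym_left: "F x2 x1 x3 x4 = - F x1 x2 x3 x4"
    and antisym_right: "F x1 x2 x4 x3 = - F x1 x2 x3 x4"
    and split_left: "F x1 x2 x3 x4 = F x1 w x3 x4 + F w x2 x3 x4"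
begin

lemma pair_symmetric: "F p q r s = F r s p q"
proof -
  \<comment> \<open>Classical argument: modulo the antisymmetries, a combination of the four cyclic identities,
      each with a different index held in the last slot, is 2 (F p q r s - F r s p q).\<close>
  have "F p q r s + F q r p s + F r p q s = 0"
    and "F q r s p + F r s q p + F s q r p = 0"
    and "F r s p q + F s p r q + F p r s q = 0"
    and "F s p q r + F p q s r + F q s p r = 0"
    by (rule cyclic)+
  moreover have "F q r s p = - F q r p s" "F r s q p = - F r s p q"
    "F p q s r = - F p q r s" "F r p s q = - F r p q s"
    by (rule antisym_right)+
  moreover have "F p r s q = - F r p s q" "F s p q r = - F p s q r" "F q s p r = - F s q p r"
    by (rule antisym_left)+
  moreover have "F s q p r = - F s q r p" by (rule antisym_right)
  moreover have "F s q r p = F q s p r" "F s p r q = F p s q r"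
    using antisym_left[of q s r p] antisym_right[of q s p r]
      antisym_left[of p s r q] antisym_right[of p s q r] by simp_all
  ultimately show ?thesis by linarith
qed

lemma split_right: "F x1 x2 x3 x4 = F x1 x2 x3 w + F x1 x2 w x4"
  using split_left[of x3 x4 x1 x2 w] pair_symmetric[of x1 x2 x3 x4]
    pair_symmetric[of x3 w x1 x2] pair_symmetric[of w x4 x1 x2]
  by simp

lemma double_difference_through:
  "F x1 x2 x3 x4 = F x1 a x3 b - F x1 a x4 b - F x2 a x3 b + F x2 a x4 b"
proof -
  have "F x1 x2 x3 x4 = F x1 a x3 x4 - F x2 a x3 x4"
    using split_left[of x1 x2 x3 x4 a] antisym_left[of a x2 x3 x4] by simp
  moreover have "F u a x3 x4 = F u a x3 b - F u a x4 b" for u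
    using split_right[of u a x3 x4 b] antisym_right[of u a b x4] by simp
  ultimately show ?thesis by simp
qed

lemma vanishes_diagonal_left: "F a a w b = 0"
  using antisym_left[of a a w b] by simp

lemma vanishes_diagonal_right: "F w a b b = 0"
  using antisym_right[of w a b b] by simp

end

lemma normalized_double_difference_unique:
  fixes F :: "'a \<Rightarrow> 'a \<Rightarrow> 'a \<Rightarrow> 'a \<Rightarrow> 'b::ab_group_add"
  assumes "\<forall>x1 x2 x3 x4. F x1 x2 x3 x4 = g x1 x3 - g x1 x4 - g x2 x3 + g x2 x4"
    and "\<forall>w. g a w = 0 \<and> g w b = 0"
  shows "g = (\<lambda>u v. F u a v b)"
  using assms by (intro ext) simp

theorem mainTheorem12:
  fixes F :: "'a \<Rightarrow> 'a \<Rightarrow> 'a \<Rightarrow> 'a \<Rightarrow> real"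
  assumes cyc: "\<And>x1 x2 x3 x4. F x1 x2 x3 x4 + F x2 x3 x1 x4 + F x3 x1 x2 x4 = 0"
    and anti12: "\<And>x1 x2 x3 x4. F x2 x1 x3 x4 = - F x1 x2 x3 x4"
    and anti34: "\<And>x1 x2 x3 x4. F x1 x2 x4 x3 = - F x1 x2 x3 x4"
    and split: "\<And>x1 x2 x3 x4 w. F x1 x2 x3 x4 = F x1 w x3 x4 + F w x2 x3 x4"
  shows "(\<exists>g :: 'a \<Rightarrow> 'a \<Rightarrow> real. \<forall>x1 x2 x3 x4.
            F x1 x2 x3 x4 = g x1 x3 - g x1 x4 - g x2 x3 + g x2 x4)
       \<and> (\<forall>a b. (\<exists>!g :: 'a \<Rightarrow> 'a \<Rightarrow> real.
              (\<forall>x1 x2 x3 x4. F x1 x2 x3 x4 = g x1 x3 - g x1 x4 - g x2 x3 + g x2 x4)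
              \<and> (\<forall>w. g a w = 0 \<and> g w b = 0))
            \<and> (let g = (\<lambda>u v. F u a v b) in
                 (\<forall>x1 x2 x3 x4. F x1 x2 x3 x4 = g x1 x3 - g x1 x4 - g x2 x3 + g x2 x4)
                 \<and> (\<forall>w. g a w = 0 \<and> g w b = 0)))"
proof -
  interpret curvature_like F
    by unfold_locales (fact cyc anti12 anti34 split)+
  have normalized: "(\<forall>x1 x2 x3 x4. F x1 x2 x3 x4
                       = F x1 a x3 b - F x1 a x4 b - F x2 a x3 b + F x2 a x4 b)
                    \<and> (\<forall>w. F a a w b = 0 \<and> F w a b b = 0)" for a b
    using double_difference_through vanishes_diagonal_left vanishes_diagonal_right by blast
  show ?thesis
  proof (intro conjI allI)
    show "\<exists>g :: 'a \<Rightarrow> 'a \<Rightarrow> real. \<forall>x1 x2 x3 x4. F x1 x2 x3 x4 = g x1 x3 - g x1 x4 - g x2 x3 + g x2 x4"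
      using normalized[of undefined undefined]
      by (intro exI[of _ "\<lambda>u v. F u undefined v undefined"]) blast
  next
    fix a b
    show "\<exists>!g :: 'a \<Rightarrow> 'a \<Rightarrow> real. (\<forall>x1 x2 x3 x4. F x1 x2 x3 x4 = g x1 x3 - g x1 x4 - g x2 x3 + g x2 x4)
                \<and> (\<forall>w. g a w = 0 \<and> g w b = 0)"
      using normalized[of a b] normalized_double_difference_unique[of F _ a b]
      by (intro ex1I[of _ "\<lambda>u v. F u a v b"]) blast+
    show "let g = (\<lambda>u v. F u a v b) in
            (\<forall>x1 x2 x3 x4. F x1 x2 x3 x4 = g x1 x3 - g x1 x4 - g x2 x3 + g x2 x4)
            \<and> (\<forall>w. g a w = 0 \<and> g w b = 0)"
      unfolding Let_def using normalized[of a b] by blast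
  qed
qed

end
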